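(* Let $K$ be a superfield and $f(X),g(X)\in K[X]$ with $g(X)\ne0$. Then there exist $q(X),r(X)\in K[X]$ such that $f(X)\in q(X)g(X)+r(X)$ and either $r(X)=0$ or $\deg r(X)<\deg g(X)$.
   Context: Multivalued operations are extended to subsets by unions. A superring is a structure $(S,+,\cdot,-,0,1)$ with multivalued addition and multiplication such that $(S,+,-,0)$ is a commutative multigroup, $(S,\cdot,1)$ is a commutative multimonoid, $a\cdot0=\{0\}$, $c(a+b)\subseteq ca+cb$, and $-(ab)=(-a)b=a(-b)$ (multigroup axioms: $c\in ab\Rightarrow a\in c\,r(b)$ and $b\in r(a)c$; $b\in a\cdot1\iff a=b$; $(ab)c\subseteq a(bc)$; $ab=ba$; multimonoid: the last two and $a\in 1\cdot a$). A superdomain is a nontrivial superring in which $0\in ab$ iff $a=0$ or $b=0$. A superfield is a superdomain in which for every $a\ne0$ there exists $b$ with $1\in ab$. The superring of polynomials $R[X]$ is the set of finitely supported sequences $(a_n)_{n\in\omega}$ with $(c_n)\in(a_n)+(b_n)$ iff $c_n\in a_n+b_n$ for all $n$, and $(c_n)\in(a_n)\cdot(b_n)$ iff $c_n\in a_0b_n+a_1b_{n-1}+\dots+a_nb_0$ for all $n$; $-(a_n)=(-a_n)$, $0=(0,0,\dots)$, $1=(1,0,\dots)$. The degree of a nonzero polynomial is the largest $n$ with $a_n\ne0$. *)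

theory Defs
  imports Main
begin

text \<open>A structure with multivalued addition and multiplication on an ambient type
  (the whole type is the carrier).\<close>
record 'a hyperstr =
  hadd  :: "'a \<Rightarrow> 'a \<Rightarrow> 'a set"
  hmul  :: "'a \<Rightarrow> 'a \<Rightarrow> 'a set"
  hneg  :: "'a \<Rightarrow> 'a"
  hzero :: 'a
  hone  :: 'a

definition set_op :: "('a \<Rightarrow> 'a \<Rightarrow> 'a set) \<Rightarrow> 'a set \<Rightarrow> 'a set \<Rightarrow> 'a set" where
  "set_op op A B = (\<Union>a\<in>A. \<Union>b\<in>B. op a b)"

definition comm_multigroup ::
  "('a \<Rightarrow> 'a \<Rightarrow> 'a set) \<Rightarrow> ('a \<Rightarrow> 'a) \<Rightarrow> 'a \<Rightarrow> bool" where
  "comm_multigroup op r e \<longleftrightarrow>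
     (\<forall>a b c. c \<in> op a b \<longrightarrow> a \<in> op c (r b) \<and> b \<in> op (r a) c) \<and>
     (\<forall>a b. b \<in> op a e \<longleftrightarrow> a = b) \<and>
     (\<forall>a b c. set_op op (op a b) {c} \<subseteq> set_op op {a} (op b c)) \<and>
     (\<forall>a b. op a b = op b a)"

definition comm_multimonoid :: "('a \<Rightarrow> 'a \<Rightarrow> 'a set) \<Rightarrow> 'a \<Rightarrow> bool" where
  "comm_multimonoid op e \<longleftrightarrow>
     (\<forall>a b c. set_op op (op a b) {c} \<subseteq> set_op op {a} (op b c)) \<and>
     (\<forall>a b. op a b = op b a) \<and>
     (\<forall>a. a \<in> op e a)"

definition superring :: "('a, 'b) hyperstr_scheme \<Rightarrow> bool" where
  "superring S \<longleftrightarrow>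
     comm_multigroup (hadd S) (hneg S) (hzero S) \<and>
     comm_multimonoid (hmul S) (hone S) \<and>
     (\<forall>a. hmul S a (hzero S) = {hzero S}) \<and>
     (\<forall>a b c. set_op (hmul S) {c} (hadd S a b)
               \<subseteq> set_op (hadd S) (hmul S c a) (hmul S c b)) \<and>
     (\<forall>a b. hneg S ` hmul S a b = hmul S (hneg S a) b \<and>
            hmul S (hneg S a) b = hmul S a (hneg S b))"

definition superdomain :: "('a, 'b) hyperstr_scheme \<Rightarrow> bool" where
  "superdomain S \<longleftrightarrow> superring S \<and> hzero S \<noteq> hone S \<and>
     (\<forall>a b. hzero S \<in> hmul S a b \<longleftrightarrow> a = hzero S \<or> b = hzero S)"

definition superfield :: "('a, 'b) hyperstr_scheme \<Rightarrow> bool" where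
  "superfield S \<longleftrightarrow> superdomain S \<and>
     (\<forall>a. a \<noteq> hzero S \<longrightarrow> (\<exists>b. hone S \<in> hmul S a b))"

definition is_poly :: "('a, 'b) hyperstr_scheme \<Rightarrow> (nat \<Rightarrow> 'a) \<Rightarrow> bool" where
  "is_poly S p \<longleftrightarrow> finite {n. p n \<noteq> hzero S}"

definition poly_zero :: "('a, 'b) hyperstr_scheme \<Rightarrow> nat \<Rightarrow> 'a" where
  "poly_zero S = (\<lambda>n. hzero S)"

definition poly_add :: "('a, 'b) hyperstr_scheme \<Rightarrow> (nat \<Rightarrow> 'a) \<Rightarrow> (nat \<Rightarrow> 'a) \<Rightarrow> (nat \<Rightarrow> 'a) set" where
  "poly_add S a b = {c. is_poly S c \<and> (\<forall>n. c n \<in> hadd S (a n) (b n))}"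

fun conv_sum :: "('a, 'b) hyperstr_scheme \<Rightarrow> (nat \<Rightarrow> 'a) \<Rightarrow> (nat \<Rightarrow> 'a) \<Rightarrow> nat \<Rightarrow> nat \<Rightarrow> 'a set" where
  "conv_sum S a b n 0 = hmul S (a 0) (b n)"
| "conv_sum S a b n (Suc k) = set_op (hadd S) (conv_sum S a b n k) (hmul S (a (Suc k)) (b (n - Suc k)))"

definition poly_mul :: "('a, 'b) hyperstr_scheme \<Rightarrow> (nat \<Rightarrow> 'a) \<Rightarrow> (nat \<Rightarrow> 'a) \<Rightarrow> (nat \<Rightarrow> 'a) set" where
  "poly_mul S a b = {c. is_poly S c \<and> (\<forall>n. c n \<in> conv_sum S a b n n)}"

definition poly_deg :: "('a, 'b) hyperstr_scheme \<Rightarrow> (nat \<Rightarrow> 'a) \<Rightarrow> nat" where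
  "poly_deg S p = (GREATEST n. p n \<noteq> hzero S)"

end

theory Submission
  imports Defs
begin

text \<open>Long division works coefficient by coefficient from the top, as over a field.
  Let \<open>m = deg g\<close>. The coefficient \<open>q i\<close> of the quotient only enters the coefficients
  \<open>k \<ge> i + m\<close> of \<open>q g\<close>, and in coefficient \<open>i + m\<close> it occurs only in the summand
  \<open>q i \<cdot> g m\<close>, the earlier summands being zero. Taking any element \<open>s\<close> of the sum of the later
  summands, the multigroup axioms give \<open>t\<close> with \<open>f (i + m) \<in> t + s\<close>, and invertibility of
  \<open>g m\<close> gives \<open>q i\<close> with \<open>t \<in> q i \<cdot> g m\<close>. Once every coefficient \<open>k \<ge> m\<close> of \<open>f\<close> lies in
  the corresponding coefficient set of \<open>q g\<close>, the lower ones are matched by a remainder of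
  degree \<open>< m\<close>, again by solving \<open>f k \<in> p k + r k\<close> in the multigroup.\<close>

lemma set_op_iff: "x \<in> set_op op A B \<longleftrightarrow> (\<exists>a\<in>A. \<exists>b\<in>B. x \<in> op a b)"
  unfolding set_op_def by blast

fun hsum :: "('a \<Rightarrow> 'a \<Rightarrow> 'a set) \<Rightarrow> (nat \<Rightarrow> 'a set) \<Rightarrow> nat \<Rightarrow> 'a set" where
  "hsum op T 0 = T 0"
| "hsum op T (Suc k) = set_op op (hsum op T k) (T (Suc k))"

fun hsum_tail :: "('a \<Rightarrow> 'a \<Rightarrow> 'a set) \<Rightarrow> 'a \<Rightarrow> (nat \<Rightarrow> 'a set) \<Rightarrow> nat \<Rightarrow> nat \<Rightarrow> 'a set" where
  "hsum_tail op e T j 0 = {e}"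
| "hsum_tail op e T j (Suc d) = set_op op (hsum_tail op e T j d) (T (j + Suc d))"

lemma hsum_cong: "(\<And>i. i \<le> k \<Longrightarrow> T i = T' i) \<Longrightarrow> hsum op T k = hsum op T' k"
  by (induction k) auto

lemma hsum_tail_cong:
  "(\<And>i. j < i \<Longrightarrow> T i = T' i) \<Longrightarrow> hsum_tail op e T j d = hsum_tail op e T' j d"
  by (induction d) auto

lemma conv_sum_eq_hsum:
  "conv_sum K a b n k = hsum (hadd K) (\<lambda>i. hmul K (a i) (b (n - i))) k"
  by (induction k) auto

locale additive_multigroup =
  fixes add :: "'a \<Rightarrow> 'a \<Rightarrow> 'a set" and neg :: "'a \<Rightarrow> 'a" and zero :: 'a
  assumes comm_multigroup: "comm_multigroup add neg zero"
begin

lemma add_commute: "add a b = add b a"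
  using comm_multigroup unfolding comm_multigroup_def by simp

lemma add_zero_right: "add a zero = {a}"
  using comm_multigroup unfolding comm_multigroup_def by auto

lemma add_zero_left: "add zero a = {a}"
  using add_commute add_zero_right by metis

lemma add_reversible: "c \<in> add a b \<Longrightarrow> a \<in> add c (neg b) \<and> b \<in> add (neg a) c"
  using comm_multigroup unfolding comm_multigroup_def by simp

lemma add_assoc_subset: "set_op add (add a b) {c} \<subseteq> set_op add {a} (add b c)"
  using comm_multigroup unfolding comm_multigroup_def by simp

lemma zero_in_add_neg: "zero \<in> add (neg x) x"
  using add_reversible[of x x zero] add_zero_right by blast

lemma neg_neg: "neg (neg x) = x"
proof -
  have "x \<in> add (neg (neg x)) zero"
    using add_reversible[OF zero_in_add_neg[of x]] by blast
  then show ?thesis using add_zero_right by simp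
qed

lemma add_nonempty: "add b a \<noteq> {}"
proof -
  have "a \<in> set_op add (add (neg b) b) {a}"
    using zero_in_add_neg[of b] add_zero_left[of a] unfolding set_op_def by blast
  then have "a \<in> set_op add {neg b} (add b a)" using add_assoc_subset by blast
  then show ?thesis unfolding set_op_def by blast
qed

lemma exists_left_summand: "\<exists>t. c \<in> add t s"
proof -
  obtain t where "t \<in> add c (neg s)" using add_nonempty by blast
  then have "c \<in> add t (neg (neg s))" using add_reversible by blast
  then show ?thesis using neg_neg by metis
qed

lemma exists_right_summand: "\<exists>r. c \<in> add p r"
  using exists_left_summand add_commute by metis

text \<open>The axiom only gives one inclusion; commutativity turns it into the other.\<close>
lemma set_op_assoc: "set_op add (set_op add A B) C = set_op add A (set_op add B C)"
proof (intro equalityI subsetI)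
  fix x assume "x \<in> set_op add (set_op add A B) C"
  then obtain a b c where abc: "a \<in> A" "b \<in> B" "c \<in> C" "x \<in> set_op add (add a b) {c}"
    unfolding set_op_def by blast
  then have "x \<in> set_op add {a} (add b c)" using add_assoc_subset by blast
  then show "x \<in> set_op add A (set_op add B C)" using abc unfolding set_op_def by blast
next
  fix x assume "x \<in> set_op add A (set_op add B C)"
  then obtain a b c where abc: "a \<in> A" "b \<in> B" "c \<in> C" "x \<in> set_op add (add c b) {a}"
    using add_commute unfolding set_op_def by blast
  then have "x \<in> set_op add {c} (add b a)" using add_assoc_subset by blast
  then obtain w where "w \<in> add a b" "x \<in> add w c" using add_commute unfolding set_op_def by blast
  then show "x \<in> set_op add (set_op add A B) C" using abc unfolding set_op_def by blast
qed

lemma set_op_zero_right: "set_op add X {zero} = X"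
  unfolding set_op_def by (simp add: add_zero_right)

lemma set_op_zero_left: "set_op add {zero} X = X"
  unfolding set_op_def by (simp add: add_zero_left)

lemma set_op_nonempty: "A \<noteq> {} \<Longrightarrow> B \<noteq> {} \<Longrightarrow> set_op add A B \<noteq> {}"
  using add_nonempty unfolding set_op_def by fast

lemma hsum_split:
  "set_op add (hsum add T j) (hsum_tail add zero T j d) = hsum add T (j + d)"
proof (induction d)
  case 0 then show ?case by (simp add: set_op_zero_right)
next
  case (Suc d)
  then show ?case by (simp only: hsum_tail.simps add_Suc_right hsum.simps flip: set_op_assoc)
qed

lemma hsum_eq_zero: "(\<And>i. i \<le> k \<Longrightarrow> T i = {zero}) \<Longrightarrow> hsum add T k = {zero}"
  by (induction k) (simp_all add: set_op_zero_right)

lemma hsum_eq_last: "(\<And>i. i < k \<Longrightarrow> T i = {zero}) \<Longrightarrow> hsum add T k = T k"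
proof (cases k)
  case (Suc j)
  assume "\<And>i. i < k \<Longrightarrow> T i = {zero}"
  then have "hsum add T j = {zero}" using Suc by (intro hsum_eq_zero) auto
  then show ?thesis using Suc by (simp add: set_op_zero_left)
qed simp

lemma hsum_nonempty: "(\<And>i. T i \<noteq> {}) \<Longrightarrow> hsum add T k \<noteq> {}"
  by (induction k) (simp_all add: set_op_nonempty)

lemma hsum_tail_nonempty: "(\<And>i. T i \<noteq> {}) \<Longrightarrow> hsum_tail add e T j d \<noteq> {}"
  by (induction d) (simp_all add: set_op_nonempty)

end

lemma is_poly_poly_zero: "is_poly S (poly_zero S)"
  unfolding is_poly_def poly_zero_def by simp

lemma is_poly_fun_upd: "is_poly S p \<Longrightarrow> is_poly S (p(i := x))"
  unfolding is_poly_def by (rule finite_subset[of _ "insert i {n. p n \<noteq> hzero S}"]) auto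

lemma is_poly_bounded: "is_poly S p \<Longrightarrow> \<exists>n. \<forall>k\<ge>n. p k = hzero S"
  unfolding is_poly_def finite_nat_set_iff_bounded by (auto simp: not_less[symmetric])

lemma coeff_eq_zero_above_poly_deg:
  assumes "is_poly S p" and "poly_deg S p < l"
  shows "p l = hzero S"
proof (rule ccontr)
  assume "p l \<noteq> hzero S"
  moreover obtain n where "\<And>k. p k \<noteq> hzero S \<Longrightarrow> k \<le> n"
    using assms(1) unfolding is_poly_def finite_nat_set_iff_bounded_le by blast
  ultimately have "l \<le> poly_deg S p" unfolding poly_deg_def by (rule Greatest_le_nat)
  then show False using assms(2) by simp
qed

lemma poly_deg_coeff_nonzero:
  assumes "is_poly S p" and "p \<noteq> poly_zero S"
  shows "p (poly_deg S p) \<noteq> hzero S"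
proof -
  have "\<exists>l. p l \<noteq> hzero S" using assms(2) unfolding poly_zero_def by auto
  moreover obtain n where "\<And>k. p k \<noteq> hzero S \<Longrightarrow> k \<le> n"
    using assms(1) unfolding is_poly_def finite_nat_set_iff_bounded_le by blast
  ultimately show ?thesis unfolding poly_deg_def by (rule GreatestI_ex_nat)
qed

lemma poly_deg_less:
  assumes "\<And>l. p l \<noteq> hzero S \<Longrightarrow> l < m"
  shows "p = poly_zero S \<or> poly_deg S p < m"
proof (cases "p = poly_zero S")
  case False
  then have "\<exists>l. p l \<noteq> hzero S" unfolding poly_zero_def by auto
  then have "p (poly_deg S p) \<noteq> hzero S"
    unfolding poly_deg_def by (rule GreatestI_ex_nat) (use assms less_imp_le in blast)
  then show ?thesis using assms by blast
qed simp

locale superring_arith =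
  fixes K :: "('a, 'b) hyperstr_scheme"
  assumes superring: "superring K"
begin

sublocale additive_multigroup "hadd K" "hneg K" "hzero K"
  using superring unfolding superring_def by unfold_locales simp

lemma mul_commute: "hmul K a b = hmul K b a"
  using superring unfolding superring_def comm_multimonoid_def by simp

lemma one_mul_in: "a \<in> hmul K (hone K) a"
  using superring unfolding superring_def comm_multimonoid_def by blast

lemma mul_assoc_subset: "set_op (hmul K) (hmul K a b) {c} \<subseteq> set_op (hmul K) {a} (hmul K b c)"
  using superring unfolding superring_def comm_multimonoid_def by simp

lemma mul_zero: "hmul K a (hzero K) = {hzero K}"
  using superring unfolding superring_def by simp

lemma zero_mul: "hmul K (hzero K) a = {hzero K}"
  using mul_commute mul_zero by metis

lemma in_mul_inverse_mul:
  assumes "hone K \<in> hmul K b b'"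
  shows "t \<in> set_op (hmul K) {b} (hmul K b' t)"
proof -
  have "t \<in> set_op (hmul K) (hmul K b b') {t}"
    using assms one_mul_in[of t] unfolding set_op_def by blast
  then show ?thesis using mul_assoc_subset by blast
qed

lemma conv_sum_eq_zero:
  assumes "\<And>j. j \<le> k \<Longrightarrow> a j = hzero K \<or> b (n - j) = hzero K"
  shows "conv_sum K a b n k = {hzero K}"
  unfolding conv_sum_eq_hsum using assms by (intro hsum_eq_zero) (metis mul_zero zero_mul)

lemma conv_sum_fun_upd:
  assumes "b (n - i) = hzero K"
  shows "conv_sum K (a(i := x)) b n k = conv_sum K a b n k"
  unfolding conv_sum_eq_hsum using assms by (intro hsum_cong) (simp add: mul_zero)

end

locale superfield_division =
  fixes K :: "('a, 'b) hyperstr_scheme"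
  assumes superfield: "superfield K"
begin

sublocale superring_arith
  using superfield unfolding superfield_def superdomain_def by unfold_locales simp

lemma exists_inverse: "a \<noteq> hzero K \<Longrightarrow> \<exists>b. hone K \<in> hmul K a b"
  using superfield unfolding superfield_def by simp

lemma mul_nonempty: "hmul K x y \<noteq> {}"
proof (cases "y = hzero K")
  case False
  then obtain y' where "hone K \<in> hmul K y' y" using exists_inverse mul_commute by metis
  then have "x \<in> set_op (hmul K) {y'} (hmul K y x)" by (rule in_mul_inverse_mul)
  then show ?thesis using mul_commute unfolding set_op_def by fastforce
qed (simp add: mul_zero)

lemma exists_factor: "b \<noteq> hzero K \<Longrightarrow> \<exists>x. t \<in> hmul K x b"
proof -
  assume "b \<noteq> hzero K"
  then obtain b' where "hone K \<in> hmul K b b'" using exists_inverse by blast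
  then have "t \<in> set_op (hmul K) {b} (hmul K b' t)" by (rule in_mul_inverse_mul)
  then show ?thesis using mul_commute unfolding set_op_def by fastforce
qed

lemma conv_sum_nonempty: "conv_sum K a b n k \<noteq> {}"
  unfolding conv_sum_eq_hsum by (rule hsum_nonempty) (rule mul_nonempty)

lemma conv_sum_solve_coeff:
  assumes "b m \<noteq> hzero K" and "\<And>j. j < i \<Longrightarrow> a j = hzero K"
  shows "\<exists>x. c \<in> conv_sum K (a(i := x)) b (i + m) (i + m)"
proof -
  define T where "T x = (\<lambda>j. hmul K ((a(i := x)) j) (b (i + m - j)))" for x
  have tail: "hsum_tail (hadd K) (hzero K) (T x) i m = hsum_tail (hadd K) (hzero K) (T (a i)) i m"
    for x by (rule hsum_tail_cong) (simp add: T_def)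
  have head: "hsum (hadd K) (T x) i = hmul K x (b m)" for x
    by (subst hsum_eq_last) (simp_all add: T_def assms(2) zero_mul)
  have "hsum_tail (hadd K) (hzero K) (T (a i)) i m \<noteq> {}"
    by (rule hsum_tail_nonempty) (simp add: T_def mul_nonempty)
  then obtain s where s: "s \<in> hsum_tail (hadd K) (hzero K) (T (a i)) i m" by blast
  obtain t where t: "c \<in> hadd K t s" using exists_left_summand by blast
  obtain x where x: "t \<in> hmul K x (b m)" using exists_factor[OF assms(1)] by blast
  have "c \<in> set_op (hadd K) (hsum (hadd K) (T x) i) (hsum_tail (hadd K) (hzero K) (T x) i m)"
    unfolding head tail[of x] set_op_iff using s t x by blast
  then have "c \<in> conv_sum K (a(i := x)) b (i + m) (i + m)"
    by (simp only: hsum_split conv_sum_eq_hsum T_def)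
  then show ?thesis ..
qed

lemma quotient_coeff_step:
  assumes g_m: "g m \<noteq> hzero K" and g_above: "\<And>l. m < l \<Longrightarrow> g l = hzero K"
    and q: "is_poly K q" "\<And>j. j < Suc i \<Longrightarrow> q j = hzero K"
    and f: "\<And>k. Suc i + m \<le> k \<Longrightarrow> f k \<in> conv_sum K q g k k"
  shows "\<exists>q'. is_poly K q' \<and> (\<forall>j<i. q' j = hzero K) \<and>
           (\<forall>k\<ge>i + m. f k \<in> conv_sum K q' g k k)"
proof -
  obtain x where x: "f (i + m) \<in> conv_sum K (q(i := x)) g (i + m) (i + m)"
    using conv_sum_solve_coeff[of g m i q, OF g_m] q(2) by auto
  have "f k \<in> conv_sum K (q(i := x)) g k k" if "i + m \<le> k" for k
  proof (cases "k = i + m")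
    case False
    with that have "Suc i + m \<le> k" by simp
    moreover have "g (k - i) = hzero K" using \<open>Suc i + m \<le> k\<close> by (intro g_above) simp
    ultimately show ?thesis using f by (simp add: conv_sum_fun_upd)
  qed (use x in simp)
  moreover have "\<forall>j<i. (q(i := x)) j = hzero K" using q(2) by simp
  ultimately show ?thesis using is_poly_fun_upd[OF q(1)] by blast
qed

lemma exists_quotient:
  assumes f: "is_poly K f"
    and g_m: "g m \<noteq> hzero K" and g_above: "\<And>l. m < l \<Longrightarrow> g l = hzero K"
  shows "\<exists>q. is_poly K q \<and> (\<forall>k\<ge>m. f k \<in> conv_sum K q g k k)"
proof -
  obtain n where f_above: "\<And>k. n \<le> k \<Longrightarrow> f k = hzero K"
    using is_poly_bounded[OF f] by blast
  have "\<exists>q. is_poly K q \<and> (\<forall>j<i. q j = hzero K) \<and> (\<forall>k\<ge>i + m. f k \<in> conv_sum K q g k k)"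
    if "i \<le> n" for i
    using that
  proof (induction i rule: inc_induct)
    case base
    have "f k \<in> conv_sum K (poly_zero K) g k k" if "n + m \<le> k" for k
      using that f_above conv_sum_eq_zero unfolding poly_zero_def by simp
    then show ?case using is_poly_poly_zero unfolding poly_zero_def by blast
  next
    case (step i)
    then obtain q where "is_poly K q" "\<And>j. j < Suc i \<Longrightarrow> q j = hzero K"
      "\<And>k. Suc i + m \<le> k \<Longrightarrow> f k \<in> conv_sum K q g k k"
      by blast
    then show ?case using quotient_coeff_step[of g m, OF g_m g_above] by blast
  qed
  then show ?thesis by fastforce
qed

lemma exists_remainder:
  assumes f: "is_poly K f" and quotient: "\<And>k. m \<le> k \<Longrightarrow> f k \<in> conv_sum K q g k k"
  shows "\<exists>r. is_poly K r \<and> (\<forall>l. r l \<noteq> hzero K \<longrightarrow> l < m) \<and>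
           f \<in> set_op (poly_add K) (poly_mul K q g) {r}"
proof -
  define p where "p k = (if k < m then (SOME c. c \<in> conv_sum K q g k k) else f k)" for k
  define r where "r k = (if k < m then (SOME d. f k \<in> hadd K (p k) d) else hzero K)" for k
  have p_coeff: "p k \<in> conv_sum K q g k k" for k
    using quotient conv_sum_nonempty[of q g k k] unfolding p_def by (simp add: some_in_eq)
  have r_coeff: "f k \<in> hadd K (p k) (r k)" for k
  proof (cases "k < m")
    case True
    then show ?thesis using someI_ex[OF exists_right_summand[of "f k" "p k"]] by (simp add: r_def)
  qed (simp add: r_def p_def add_zero_right)
  have "{k. p k \<noteq> hzero K} \<subseteq> {..<m} \<union> {k. f k \<noteq> hzero K}" by (auto simp: p_def)
  moreover have "finite ({..<m} \<union> {k. f k \<noteq> hzero K})" using f by (simp add: is_poly_def)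
  ultimately have "is_poly K p" unfolding is_poly_def by (rule finite_subset)
  then have "p \<in> poly_mul K q g" unfolding poly_mul_def using p_coeff by simp
  moreover have "f \<in> poly_add K p r" unfolding poly_add_def using f r_coeff by simp
  moreover have r_support: "\<forall>l. r l \<noteq> hzero K \<longrightarrow> l < m" by (simp add: r_def)
  moreover from r_support have "is_poly K r"
    unfolding is_poly_def finite_nat_set_iff_bounded by blast
  ultimately show ?thesis unfolding set_op_iff by blast
qed

end

theorem theorem3p5:
  fixes K :: "('a, 'b) hyperstr_scheme" and f g :: "nat \<Rightarrow> 'a"
  assumes "superfield K"
    and "is_poly K f" and "is_poly K g"
    and "g \<noteq> poly_zero K"
  shows "\<exists>q r. is_poly K q \<and> is_poly K r \<and>
           f \<in> set_op (poly_add K) (poly_mul K q g) {r} \<and>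
           (r = poly_zero K \<or> poly_deg K r < poly_deg K g)"
proof -
  interpret superfield_division K by (rule superfield_division.intro) fact
  let ?m = "poly_deg K g"
  obtain q where q: "is_poly K q" "\<And>k. ?m \<le> k \<Longrightarrow> f k \<in> conv_sum K q g k k"
    using exists_quotient[of f g, OF assms(2) poly_deg_coeff_nonzero[OF assms(3,4)]]
      coeff_eq_zero_above_poly_deg[OF assms(3)] by blast
  obtain r where "is_poly K r" "\<And>l. r l \<noteq> hzero K \<Longrightarrow> l < ?m"
    "f \<in> set_op (poly_add K) (poly_mul K q g) {r}"
    using exists_remainder[OF assms(2) q(2)] by blast
  then show ?thesis using q(1) poly_deg_less by blast
qed

end
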